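(* Let $n\ge1$, $d\ge2$ and fix $p$ with $1\le p\le d-1$. Let $\phi_v:\mathbf H_d\to\mathbf H_{d+1}$ be the $\mathbb Q(v)$-algebra homomorphism with $\phi_v(T_i)=T_i$ for $1\le i<p$, $\phi_v(T_p)=T_pT_{p+1}T_p^{-1}$, and $\phi_v(T_i)=T_{i+1}$ for $p<i\le d-1$. Let $\phi^{\mathbf T}_1:\mathbf T_{n,d}\to\mathbf T_{n+1,d+1}$ be the $\mathbb Q(v)$-linear map \[ [r_1,\dots,r_d]\mapsto[r_1,\dots,r_p,\,n+1,\,r_{p+1},\dots,r_d]\qquad(1\le r_k\le n). \] Then for all $x\in\mathbf T_{n,d}$ and $h\in\mathbf H_d$, $\phi^{\mathbf T}_1(x\cdot h)=\phi^{\mathbf T}_1(x)\cdot\phi_v(h)$.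
   Context: $\mathbf H_d$ is the $\mathbb Q(v)$-algebra generated by $T_1,\dots,T_{d-1}$ with relations $(T_i-v)(T_i+v^{-1})=0$, $T_iT_{i+1}T_i=T_{i+1}T_iT_{i+1}$, and $T_iT_j=T_jT_i$ for $|i-j|\ge2$ (the Hecke algebra of type $A_{d-1}$ with equal parameters, tensored up to $\mathbb Q(v)$). $\mathbf V_n$ is the $\mathbb Q(v)$-vector space with basis $e_1,\dots,e_n$, $\mathbf T_{n,d}=\mathbf V_n^{\otimes d}$, and $[r_1,\dots,r_d]:=e_{r_1}\otimes\cdots\otimes e_{r_d}$. $\mathbf T_{n,d}$ is a right $\mathbf H_d$-module via, for $1\le i\le d-1$: $[\dots,r_i,r_{i+1},\dots]\cdot T_i=[\dots,r_{i+1},r_i,\dots]$ if $r_i<r_{i+1}$; $=v[\dots,r_i,r_{i+1},\dots]$ if $r_i=r_{i+1}$; $=(v-v^{-1})[\dots,r_i,r_{i+1},\dots]+[\dots,r_{i+1},r_i,\dots]$ if $r_i>r_{i+1}$ (only positions $i,i+1$ change). The map $\phi_v$ is the edge-contraction embedding of Hecke algebras for type $A_d$ along the edge $\{p,p+1\}$ (with $s_+=p$, $s_-=p+1$), and is a well-defined algebra homomorphism. *)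

theory Defs
  imports "HOL-Computational_Algebra.Polynomial" "HOL-Computational_Algebra.Fraction_Field"
begin

(* The field Q(v) of rational functions in an indeterminate v *)
type_synonym qv = "rat poly fract"

definition vv :: qv where "vv = Fract [:0, 1:] 1"

(* Basis words [r_1,...,r_d] with 1 <= r_k <= n; vectors of T_{n,d} are coefficient
   functions on lists vanishing outside this finite set *)
definition words :: "nat \<Rightarrow> nat \<Rightarrow> nat list set" where
  "words n d = {rs. length rs = d \<and> set rs \<subseteq> {1..n}}"

definition basisvec :: "nat list \<Rightarrow> nat list \<Rightarrow> qv" where
  "basisvec r = (\<lambda>s. if s = r then 1 else 0)"

(* swap positions i, i+1 (1-indexed), i.e. list indices i-1, i *)
definition swapw :: "nat \<Rightarrow> nat list \<Rightarrow> nat list" where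
  "swapw i r = r[i - 1 := r ! i, i := r ! (i - 1)]"

definition act_basis :: "nat \<Rightarrow> nat list \<Rightarrow> nat list \<Rightarrow> qv" where
  "act_basis i r =
     (let a = r ! (i - 1); b = r ! i in
      if a < b then basisvec (swapw i r)
      else if a = b then (\<lambda>s. vv * basisvec r s)
      else (\<lambda>s. (vv - inverse vv) * basisvec r s + basisvec (swapw i r) s))"

definition actT :: "nat \<Rightarrow> nat \<Rightarrow> (nat list \<Rightarrow> qv) \<Rightarrow> nat \<Rightarrow> nat list \<Rightarrow> qv" where
  "actT n d x i = (\<lambda>s. \<Sum>r\<in>words n d. x r * act_basis i r s)"

(* Expressions for elements of H_d: generated as a Q(v)-algebra by T_i and T_i^{-1}
   (every element of H_d is represented by such an expression) *)
datatype hexp = Gen nat | GenInv nat | Scal qv | Add hexp hexp | Mul hexp hexp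

fun hwf :: "nat \<Rightarrow> hexp \<Rightarrow> bool" where
  "hwf d (Gen i) = (1 \<le> i \<and> i \<le> d - 1)"
| "hwf d (GenInv i) = (1 \<le> i \<and> i \<le> d - 1)"
| "hwf d (Scal c) = True"
| "hwf d (Add a b) = (hwf d a \<and> hwf d b)"
| "hwf d (Mul a b) = (hwf d a \<and> hwf d b)"

(* right action of H_d on T_{n,d}; T_i^{-1} = T_i - (v - v^{-1}) by the quadratic relation *)
fun hact :: "nat \<Rightarrow> nat \<Rightarrow> (nat list \<Rightarrow> qv) \<Rightarrow> hexp \<Rightarrow> nat list \<Rightarrow> qv" where
  "hact n d x (Gen i) = actT n d x i"
| "hact n d x (GenInv i) = (\<lambda>s. actT n d x i s - (vv - inverse vv) * x s)"
| "hact n d x (Scal c) = (\<lambda>s. c * x s)"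
| "hact n d x (Add a b) = (\<lambda>s. hact n d x a s + hact n d x b s)"
| "hact n d x (Mul a b) = hact n d (hact n d x a) b"

fun phiv :: "nat \<Rightarrow> hexp \<Rightarrow> hexp" where
  "phiv p (Gen i) =
     (if i < p then Gen i
      else if i = p then Mul (Mul (Gen p) (Gen (p + 1))) (GenInv p)
      else Gen (i + 1))"
| "phiv p (GenInv i) =
     (if i < p then GenInv i
      else if i = p then Mul (Mul (Gen p) (GenInv (p + 1))) (GenInv p)
      else GenInv (i + 1))"
| "phiv p (Scal c) = Scal c"
| "phiv p (Add a b) = Add (phiv p a) (phiv p b)"
| "phiv p (Mul a b) = Mul (phiv p a) (phiv p b)"

definition insw :: "nat \<Rightarrow> nat \<Rightarrow> nat list \<Rightarrow> nat list" where
  "insw n p r = take p r @ [n + 1] @ drop p r"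

definition phiT :: "nat \<Rightarrow> nat \<Rightarrow> nat \<Rightarrow> (nat list \<Rightarrow> qv) \<Rightarrow> nat list \<Rightarrow> qv" where
  "phiT n d p x = (\<lambda>s. \<Sum>r\<in>words n d. x r * basisvec (insw n p r) s)"

end

theory Submission
  imports Defs
begin

text \<open>The inserted letter \<open>n + 1\<close> exceeds every letter of a word in \<open>T\<^sub>n\<^sub>,\<^sub>d\<close>. Hence,
  when it sits at position \<open>q + 1\<close>, \<open>T\<^sub>q\<close> just moves it to position \<open>q\<close>, and
  \<open>T\<^sub>q\<^sup>-\<^sup>1 = T\<^sub>q - (v - v\<^sup>-\<^sup>1)\<close> moves it back; away from it, \<open>T\<^sub>i\<close> acts on the remaining
  letters exactly as before, after shifting the index past the inserted position. So
  \<open>T\<^sub>p T\<^sub>p\<^sub>+\<^sub>1 T\<^sub>p\<^sup>-\<^sup>1\<close> moves the new letter out of the way, lets \<open>T\<^sub>p\<^sub>+\<^sub>1\<close> act as \<open>T\<^sub>p\<close> did,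
  and moves the letter back. All identities are checked on basis words and extended linearly.\<close>

lemma finite_words: "finite (words n d)"
proof -
  have "words n d = {xs. set xs \<subseteq> {1..n} \<and> length xs = d}" by (auto simp: words_def)
  thus ?thesis using finite_lists_length_eq[of "{1..n}" d] by simp
qed

lemma length_words: "r \<in> words n d \<Longrightarrow> length r = d"
  by (simp add: words_def)

lemma nth_words_le: "r \<in> words n d \<Longrightarrow> k < d \<Longrightarrow> r ! k \<le> n"
  unfolding words_def by (auto dest!: nth_mem[of k r])

lemma sum_basisvec_mult: "finite A \<Longrightarrow> u \<in> A \<Longrightarrow> (\<Sum>r\<in>A. basisvec u r * f r) = f u"
proof -
  assume "finite A" "u \<in> A"
  have "(\<Sum>r\<in>A. basisvec u r * f r) = (\<Sum>r\<in>A. if u = r then f r else 0)"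
    by (rule sum.cong) (auto simp: basisvec_def)
  with \<open>finite A\<close> \<open>u \<in> A\<close> show ?thesis by simp
qed

definition sum_linear :: "(('a \<Rightarrow> 'k::comm_semiring_1) \<Rightarrow> 'b \<Rightarrow> 'k) \<Rightarrow> bool" where
  "sum_linear F \<longleftrightarrow>
    (\<forall>(A :: 'a set) c y. F (\<lambda>s. \<Sum>r\<in>A. c r * y r s) = (\<lambda>s. \<Sum>r\<in>A. c r * F (y r) s))"

definition supported_in :: "'a set \<Rightarrow> ('a \<Rightarrow> 'k::zero) \<Rightarrow> bool" where
  "supported_in W x \<longleftrightarrow> (\<forall>r. r \<notin> W \<longrightarrow> x r = 0)"

lemma sum_linear_comp:
  fixes F G :: "('a \<Rightarrow> 'k::comm_semiring_1) \<Rightarrow> 'a \<Rightarrow> 'k"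
  assumes "sum_linear F" "sum_linear G"
  shows "sum_linear (\<lambda>y. G (F y))"
  using assms by (simp add: sum_linear_def)

lemma supported_in_expand:
  "finite W \<Longrightarrow> supported_in W x \<Longrightarrow> x = (\<lambda>s. \<Sum>r\<in>W. x r * basisvec r s)"
  by (auto simp: supported_in_def fun_eq_iff basisvec_def if_distrib cong: if_cong)

lemma sum_linear_eqI:
  assumes "sum_linear F" "sum_linear G" "finite W" "supported_in W y"
    and "\<And>r. r \<in> W \<Longrightarrow> F (basisvec r) = G (basisvec r)"
  shows "F y = G y"
proof -
  have "F y = F (\<lambda>s. \<Sum>r\<in>W. y r * basisvec r s)"
    using supported_in_expand[OF assms(3,4)] by simp
  also have "\<dots> = G (\<lambda>s. \<Sum>r\<in>W. y r * basisvec r s)"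
    using assms(1,2,5) by (simp add: sum_linear_def)
  also have "\<dots> = G y"
    using supported_in_expand[OF assms(3,4)] by simp
  finally show ?thesis .
qed

lemma sum_linear_phiT: "sum_linear (phiT n d p)"
  unfolding sum_linear_def phiT_def fun_eq_iff
  by (auto simp: sum_distrib_right sum_distrib_left mult.assoc intro: sum.swap)

lemma sum_linear_actT: "sum_linear (\<lambda>y. actT N D y i)"
  unfolding sum_linear_def actT_def fun_eq_iff
  by (auto simp: sum_distrib_right sum_distrib_left mult.assoc intro: sum.swap)

lemma sum_linear_hact: "sum_linear (\<lambda>y. hact N D y h)"
  unfolding sum_linear_def
proof (intro allI, induction h)
  case (Gen i)
  then show ?case using sum_linear_actT by (simp add: sum_linear_def)
next
  case (GenInv i)
  then show ?case using sum_linear_actT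
    by (simp add: sum_linear_def fun_eq_iff sum_distrib_left right_diff_distrib sum_subtractf
        mult_ac)
next
  case (Mul a b)
  then show ?case by simp
qed (simp_all add: fun_eq_iff sum_distrib_left distrib_left sum.distrib mult.left_commute)

lemma phiT_add: "phiT n d p (\<lambda>s. f s + g s) = (\<lambda>s. phiT n d p f s + phiT n d p g s)"
  by (simp add: phiT_def distrib_right sum.distrib fun_eq_iff)

lemma phiT_diff: "phiT n d p (\<lambda>s. f s - g s) = (\<lambda>s. phiT n d p f s - phiT n d p g s)"
  by (simp add: phiT_def left_diff_distrib sum_subtractf fun_eq_iff)

lemma phiT_scal: "phiT n d p (\<lambda>s. c * f s) = (\<lambda>s. c * phiT n d p f s)"
  by (simp add: phiT_def sum_distrib_left mult.assoc fun_eq_iff)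

lemma phiT_basisvec: "r \<in> words n d \<Longrightarrow> phiT n d p (basisvec r) = basisvec (insw n p r)"
  by (simp add: phiT_def fun_eq_iff finite_words sum_basisvec_mult)

lemma actT_basisvec: "r \<in> words N D \<Longrightarrow> actT N D (basisvec r) i = act_basis i r"
  by (simp add: actT_def fun_eq_iff finite_words sum_basisvec_mult)

lemma swapw_words: "r \<in> words N D \<Longrightarrow> 1 \<le> i \<Longrightarrow> i < D \<Longrightarrow> swapw i r \<in> words N D"
  unfolding words_def swapw_def
  by (auto dest!: set_update_subset_insert[THEN subsetD])

lemma insw_words: "r \<in> words n d \<Longrightarrow> p \<le> d \<Longrightarrow> insw n p r \<in> words (Suc n) (Suc d)"
  unfolding words_def insw_def by (auto dest: in_set_takeD in_set_dropD)

lemma act_basis_outside_words: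
  "r \<in> words N D \<Longrightarrow> 1 \<le> i \<Longrightarrow> i < D \<Longrightarrow> s \<notin> words N D \<Longrightarrow> act_basis i r s = 0"
  using swapw_words[of r N D i] by (auto simp: act_basis_def Let_def basisvec_def)

lemma supported_in_hact:
  "supported_in (words N D) x \<Longrightarrow> hwf D h \<Longrightarrow> supported_in (words N D) (hact N D x h)"
proof (induction h arbitrary: x)
  case (Gen i)
  then show ?case
    by (auto simp: supported_in_def actT_def act_basis_outside_words intro!: sum.neutral)
next
  case (GenInv i)
  then show ?case
    by (auto simp: supported_in_def actT_def act_basis_outside_words intro!: sum.neutral)
qed (auto simp: supported_in_def)

lemma insw_nth_below: "p \<le> length r \<Longrightarrow> k < p \<Longrightarrow> insw n p r ! k = r ! k"
  by (simp add: insw_def nth_append)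

lemma insw_nth_above: "p \<le> k \<Longrightarrow> k < length r \<Longrightarrow> insw n p r ! Suc k = r ! k"
  by (simp add: insw_def nth_append)

lemma insw_nth_inserted: "p \<le> length r \<Longrightarrow> insw n p r ! p = n + 1"
  by (simp add: insw_def nth_append)

lemma insw_update_below: "p \<le> length r \<Longrightarrow> k < p \<Longrightarrow> insw n p (r[k := a]) = (insw n p r)[k := a]"
  by (simp add: insw_def take_update_swap drop_update_swap list_update_append)

lemma insw_update_above:
  "p \<le> k \<Longrightarrow> k < length r \<Longrightarrow> insw n p (r[k := a]) = (insw n p r)[Suc k := a]"
  by (simp add: insw_def take_update_swap drop_update_swap list_update_append Suc_diff_le
      list_update_beyond)

lemma swapw_insw_inserted_left:
  "q < length r \<Longrightarrow> swapw (Suc q) (insw n (Suc q) r) = insw n q r"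
  by (auto simp: swapw_def insw_def nth_append list_update_append take_Suc_conv_app_nth
      Cons_nth_drop_Suc)

lemma swapw_insw_inserted_right:
  "q < length r \<Longrightarrow> swapw (Suc q) (insw n q r) = insw n (Suc q) r"
  by (simp add: swapw_def insw_def nth_append list_update_append take_Suc_conv_app_nth
      flip: Cons_nth_drop_Suc)

lemma phiT_act_basis_below:
  assumes r: "r \<in> words n d" and "1 \<le> i" "i < q" "q \<le> d"
  shows "phiT n d q (act_basis i r) = act_basis i (insw n q r)"
proof -
  have len: "length r = d" using r by (rule length_words)
  have letters: "insw n q r ! (i - 1) = r ! (i - 1)" "insw n q r ! i = r ! i"
    using assms len by (auto intro!: insw_nth_below)
  have "swapw i (insw n q r) = insw n q (swapw i r)"
    using assms len by (simp add: swapw_def insw_update_below insw_nth_below)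
  moreover have "swapw i r \<in> words n d" using swapw_words[OF r, of i] assms by simp
  ultimately show ?thesis
    unfolding act_basis_def Let_def letters
    using r by (simp add: phiT_basisvec phiT_scal phiT_add)
qed

lemma phiT_act_basis_above:
  assumes r: "r \<in> words n d" and "q < i" "i < d"
  shows "phiT n d q (act_basis i r) = act_basis (i + 1) (insw n q r)"
proof -
  have len: "length r = d" using r by (rule length_words)
  have letters: "insw n q r ! (i + 1 - 1) = r ! (i - 1)" "insw n q r ! (i + 1) = r ! i"
    using assms len insw_nth_above[of q "i - 1" r n] insw_nth_above[of q i r n] by auto
  have "swapw (i + 1) (insw n q r) = insw n q (swapw i r)"
    using assms len insw_update_above[of q "i - 1" r] insw_update_above[of q i] letters
    by (simp add: swapw_def)
  moreover have "swapw i r \<in> words n d" using swapw_words[OF r, of i] assms by simp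
  ultimately show ?thesis
    unfolding act_basis_def Let_def letters
    using r by (simp add: phiT_basisvec phiT_scal phiT_add)
qed

lemma act_basis_move_left:
  assumes r: "r \<in> words n d" and "q < d"
  shows "act_basis (Suc q) (insw n (Suc q) r) = basisvec (insw n q r)"
proof -
  have len: "length r = d" using r by (rule length_words)
  have "r ! q \<le> n" using r \<open>q < d\<close> by (rule nth_words_le)
  moreover have "insw n (Suc q) r ! q = r ! q"
    using assms len by (simp add: insw_nth_below)
  ultimately show ?thesis
    using assms len by (simp add: act_basis_def insw_nth_inserted swapw_insw_inserted_left)
qed

lemma act_basis_move_right:
  assumes r: "r \<in> words n d" and "q < d"
  shows "(\<lambda>s. act_basis (Suc q) (insw n q r) s - (vv - inverse vv) * basisvec (insw n q r) s)
    = basisvec (insw n (Suc q) r)"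
proof -
  have len: "length r = d" using r by (rule length_words)
  have "r ! q \<le> n" using r \<open>q < d\<close> by (rule nth_words_le)
  moreover have "insw n q r ! Suc q = r ! q"
    using assms len by (simp add: insw_nth_above)
  ultimately show ?thesis
    using assms len by (simp add: act_basis_def insw_nth_inserted swapw_insw_inserted_right)
qed

lemma phiT_hact_generator_shift:
  assumes y: "supported_in (words n d) y" and g: "g = Gen i \<or> g = GenInv i"
    and "1 \<le> i" "i < d" "i \<noteq> q" "q \<le> d"
  shows "phiT n d q (hact n d y g) = hact (n + 1) (d + 1) (phiT n d q y) (phiv q g)"
proof -
  have "phiT n d q (actT n d y i) = actT (n + 1) (d + 1) (phiT n d q y) (if i < q then i else i + 1)"
  proof (rule sum_linear_eqI[OF _ _ finite_words y])
    show "sum_linear (\<lambda>y. phiT n d q (actT n d y i))"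
      by (rule sum_linear_comp[OF sum_linear_actT sum_linear_phiT])
    show "sum_linear (\<lambda>y. actT (n + 1) (d + 1) (phiT n d q y) (if i < q then i else i + 1))"
      by (rule sum_linear_comp[OF sum_linear_phiT sum_linear_actT])
  next
    fix r assume r: "r \<in> words n d"
    with assms show "phiT n d q (actT n d (basisvec r) i)
        = actT (n + 1) (d + 1) (phiT n d q (basisvec r)) (if i < q then i else i + 1)"
      by (simp add: actT_basisvec phiT_basisvec insw_words phiT_act_basis_below
          phiT_act_basis_above)
  qed
  with g assms(5) show ?thesis
    by (auto simp: phiT_diff phiT_scal)
qed

lemma hact_Gen_phiT_move_left:
  assumes y: "supported_in (words n d) y" and "q < d"
  shows "hact (n + 1) (d + 1) (phiT n d (Suc q) y) (Gen (Suc q)) = phiT n d q y"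
proof (rule sum_linear_eqI[OF _ _ finite_words y])
  show "sum_linear (\<lambda>y. hact (n + 1) (d + 1) (phiT n d (Suc q) y) (Gen (Suc q)))"
    by (rule sum_linear_comp[OF sum_linear_phiT sum_linear_hact])
qed (use assms in \<open>simp_all add: sum_linear_phiT actT_basisvec phiT_basisvec insw_words
  act_basis_move_left\<close>)

lemma hact_GenInv_phiT_move_right:
  assumes y: "supported_in (words n d) y" and "q < d"
  shows "hact (n + 1) (d + 1) (phiT n d q y) (GenInv (Suc q)) = phiT n d (Suc q) y"
proof (rule sum_linear_eqI[OF _ _ finite_words y])
  show "sum_linear (\<lambda>y. hact (n + 1) (d + 1) (phiT n d q y) (GenInv (Suc q)))"
    by (rule sum_linear_comp[OF sum_linear_phiT sum_linear_hact])
qed (use assms in \<open>simp_all add: sum_linear_phiT actT_basisvec phiT_basisvec insw_words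
  act_basis_move_right\<close>)

lemma phiT_hact_contracted:
  assumes y: "supported_in (words n d) y" and g: "g = Gen (Suc q) \<or> g = GenInv (Suc q)"
    and "Suc q < d"
  shows "phiT n d (Suc q) (hact n d y g)
    = hact (n + 1) (d + 1) (phiT n d (Suc q) y) (phiv (Suc q) g)"
proof -
  have phiv_conj: "phiv (Suc q) g = Mul (Mul (Gen (Suc q)) (phiv q g)) (GenInv (Suc q))"
    using g by auto
  have "hact (n + 1) (d + 1) (phiT n d (Suc q) y) (phiv (Suc q) g)
      = hact (n + 1) (d + 1) (hact (n + 1) (d + 1)
          (hact (n + 1) (d + 1) (phiT n d (Suc q) y) (Gen (Suc q))) (phiv q g)) (GenInv (Suc q))"
    by (simp only: phiv_conj hact.simps(5))
  also have "\<dots> = hact (n + 1) (d + 1)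
      (hact (n + 1) (d + 1) (phiT n d q y) (phiv q g)) (GenInv (Suc q))"
    using y assms(3) by (simp only: hact_Gen_phiT_move_left Suc_lessD)
  also have "\<dots> = hact (n + 1) (d + 1) (phiT n d q (hact n d y g)) (GenInv (Suc q))"
    using y g assms(3) phiT_hact_generator_shift[of n d y g "Suc q" q] by simp
  also have "\<dots> = phiT n d (Suc q) (hact n d y g)"
    using g assms(3)
    by (intro hact_GenInv_phiT_move_right supported_in_hact[OF y]) auto
  finally show ?thesis ..
qed

lemma phiT_hact_generator:
  assumes "supported_in (words n d) y" and "g = Gen i \<or> g = GenInv i" and "hwf d g"
    and "1 \<le> p" "p < d"
  shows "phiT n d p (hact n d y g) = hact (n + 1) (d + 1) (phiT n d p y) (phiv p g)"
proof (cases "i = p")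
  case True
  then obtain q where "p = Suc q" using assms(4) by (cases p) auto
  with True assms show ?thesis by (simp add: phiT_hact_contracted)
next
  case False
  have "1 \<le> i" "i < d" using assms(2,3) by auto
  with False assms(1,2,5) show ?thesis by (intro phiT_hact_generator_shift) auto
qed

theorem mainTheorem10:
  fixes n d p :: nat and x :: "nat list \<Rightarrow> qv" and h :: hexp
  assumes "n \<ge> 1" and "d \<ge> 2" and "1 \<le> p" and "p \<le> d - 1"
    and "\<forall>r. r \<notin> words n d \<longrightarrow> x r = 0"
    and "hwf d h"
  shows "phiT n d p (hact n d x h) = hact (n + 1) (d + 1) (phiT n d p x) (phiv p h)"
proof -
  have "supported_in (words n d) x" "p < d"
    using assms(2,4,5) by (auto simp: supported_in_def)
  with assms(3,6) show ?thesis
  proof (induction h arbitrary: x)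
    case (Gen i)
    then show ?case by (intro phiT_hact_generator) auto
  next
    case (GenInv i)
    then show ?case by (intro phiT_hact_generator) auto
  next
    case (Mul a b)
    then show ?case using supported_in_hact by simp
  qed (simp_all add: phiT_scal phiT_add)
qed

end
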